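(* A planar structure's degrees of statical (and thus kinematical) in- or over-determinacy is invariant both under projective planar transformations and dualities.
   Context: Planar structures are considered in two settings. In the planar system, bodies in the $x,y$ plane are subjected to coplanar forces, represented as $f=(-F_y,F_x,M_z)\in\mathcal{F}_p$ (projective homogeneous coordinates of the line of action in the real projective plane $PG(2)$), and move in the plane with velocities $e=(-v_y,v_x,\omega_z)\in\mathcal{E}_c$ (homogeneous coordinates of the instantaneous centre of rotation). In the complementary planar system, bodies in the $x,y$ plane are subjected to forces orthogonal to the plane, $f=(-M_y,M_x,F_z)\in\mathcal{F}_c$ (homogeneous coordinates of the point of attack), and move with velocities $e=(-\omega_y,\omega_x,v_z)\in\mathcal{E}_p$ (homogeneous coordinates of the axis of rotation). A projective transformation (resp. duality) of a statics/kinematics problem transforms all points and lines of the structure and of the forces/velocities according to a projective transformation (resp. duality) of $PG(2)$, such that the image is in static equilibrium / compatible iff the original is. It has been established that: invertible linear maps $\mathcal{F}_p\to\mathcal{F}_p$, $\mathcal{F}_c\to\mathcal{F}_c$, $\mathcal{F}_p\leftrightarrow\mathcal{F}_c$ (forces $f_i\mapsto f_iA$) preserve static equilibrium, and invertible linear maps $\mathcal{E}_p\to\mathcal{E}_p$, $\mathcal{E}_c\to\mathcal{E}_c$, $\mathcal{E}_p\leftrightarrow\mathcal{E}_c$ preserve compatibility; every projective transformation (for maps within the same space) or duality (for maps between the $p$ and $c$ spaces) of a statics/kinematics problem is the composition of a scaling-equivalence class of such an invertible linear map with an equilibrium- (resp. compatibility-) preserving congruence (a nonzero rescaling $f_i\mapsto\psi_i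 f_i$ of the individual forces/velocities, which leaves their lines/points of attack unchanged), and every such composition gives one. Statical and kinematical degrees of indeterminacy are linked: to each kinematical degree of indeterminacy corresponds a degree of static overdeterminacy and vice versa. *)

theory Defs
  imports "HOL-Analysis.Analysis"
begin

text \<open>Bodies are indexed by a finite type 'b, force elements
(members, contacts, supports) by a finite type 'm.  Element j carries a force whose
projective homogeneous coordinates are the vector f j in R^3 (for the planar system
f = (-Fy, Fx, Mz), for the complementary system f = (-My, Mx, Fz)); its unknown
magnitude is the scalar lambda j.  The entry B$b$j is the coefficient with which
element j acts on body b (e.g. +1/-1 for the two bodies a member connects, 0 otherwise;
supports act on a single body).\<close>

definition equilibrium_map ::
  "real^'m^'b \<Rightarrow> ('m \<Rightarrow> real^3) \<Rightarrow> real^'m \<Rightarrow> real^3^'b" where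
  "equilibrium_map B f lam = (\<chi> b. \<Sum>j\<in>UNIV. (B$b$j * lam$j) *\<^sub>R f j)"

text \<open>Degree of statical indeterminacy: number of independent self-stress states.\<close>
definition stat_indet :: "real^'m^'b \<Rightarrow> ('m \<Rightarrow> real^3) \<Rightarrow> nat" where
  "stat_indet B f = dim {lam. equilibrium_map B f lam = 0}"

text \<open>Degree of statical overdeterminacy (= degree of kinematical indeterminacy):
number of independent load cases that cannot be equilibrated.\<close>
definition stat_overdet :: "real^'m^'b \<Rightarrow> ('m \<Rightarrow> real^3) \<Rightarrow> nat" where
  "stat_overdet B f = DIM(real^3^'b) - dim (range (equilibrium_map B f))"

text \<open>Projective transformation or duality of the statics problem: by the established
characterization, a composition of an invertible linear map f \<mapsto> f A (within F_p, within
F_c, or between F_p and F_c -- all identified with R^3 via homogeneous coordinates)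
with a congruence f_j \<mapsto> psi_j f_j, psi_j \<noteq> 0.  The incidence structure B is unchanged.\<close>
definition proj_transform_statics :: "('m \<Rightarrow> real^3) \<Rightarrow> ('m \<Rightarrow> real^3) \<Rightarrow> bool" where
  "proj_transform_statics f g \<longleftrightarrow>
     (\<exists>(A::real^3^3) psi. invertible A \<and> (\<forall>j. psi j \<noteq> (0::real)) \<and>
        (\<forall>j. g j = psi j *\<^sub>R (f j v* A)))"

end

theory Submission
  imports Defs
begin

text \<open>A congruence \<open>f\<^sub>j \<mapsto> \<psi>\<^sub>j f\<^sub>j\<close>
is absorbed by rescaling the unknown magnitudes, i.e. it composes the equilibrium map on the
right with an invertible diagonal map; a linear map \<open>f \<mapsto> f A\<close> commutes with the sums and
composes it on the left with the invertible map \<open>A\<close> acting on every body.  Composing a linear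
map with linear isomorphisms on either side changes neither the dimension of its kernel nor
that of its range.\<close>

lemma dim_kernel_comp_linear_iso:
  fixes E :: "'a::euclidean_space \<Rightarrow> 'c::euclidean_space"
    and S :: "'d::euclidean_space \<Rightarrow> 'a" and T :: "'c \<Rightarrow> 'e::euclidean_space"
  assumes "linear S" "bij S" "linear T" "inj T"
  shows "dim {x. T (E (S x)) = 0} = dim {y. E y = 0}"
proof -
  have T_eq_0: "T z = 0 \<longleftrightarrow> z = 0" for z
    using assms(3,4) by (metis injD linear_0)
  have "S ` {x. T (E (S x)) = 0} = {y. E y = 0}"
    using \<open>bij S\<close> by (auto simp: T_eq_0 bij_def surj_def)
  moreover have "dim (S ` {x. T (E (S x)) = 0}) = dim {x. T (E (S x)) = 0}"
    using assms(1,2) by (metis bij_is_inj dim_image_eq inj_on_subset subset_UNIV)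
  ultimately show ?thesis
    by simp
qed

lemma dim_range_comp_linear_iso:
  fixes E :: "'a \<Rightarrow> 'c::euclidean_space" and S :: "'d \<Rightarrow> 'a"
    and T :: "'c \<Rightarrow> 'e::euclidean_space"
  assumes "surj S" "linear T" "inj T"
  shows "dim (range (\<lambda>x. T (E (S x)))) = dim (range E)"
proof -
  have "range (\<lambda>x. T (E (S x))) = T ` range E"
    using \<open>surj S\<close> by (metis image_comp image_image)
  then show ?thesis
    using assms(2,3) by (metis dim_image_eq inj_on_subset subset_UNIV)
qed

lemma stat_degrees_eq_if_equilibrium_map_conj:
  fixes S :: "real^'m \<Rightarrow> real^'m" and T :: "real^3^'b \<Rightarrow> real^3^'b"
  assumes conj: "\<And>lam. equilibrium_map B g lam = T (equilibrium_map B f (S lam))"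
    and "linear S" "bij S" "linear T" "inj T"
  shows "stat_indet B g = stat_indet B f \<and> stat_overdet B g = stat_overdet B f"
proof -
  have "equilibrium_map B g = (\<lambda>lam. T (equilibrium_map B f (S lam)))"
    using conj by blast
  then show ?thesis
    unfolding stat_indet_def stat_overdet_def
    using dim_kernel_comp_linear_iso[OF assms(2-5)]
      dim_range_comp_linear_iso[OF bij_is_surj[OF \<open>bij S\<close>] assms(4,5)]
    by simp
qed

lemma equilibrium_map_scaleR_forces:
  "equilibrium_map B (\<lambda>j. psi j *\<^sub>R f j) lam = equilibrium_map B f (\<chi> j. psi j * lam $ j)"
  by (simp add: equilibrium_map_def mult_ac)

lemma equilibrium_map_vector_matrix_forces:
  "equilibrium_map B (\<lambda>j. f j v* A) lam = (\<chi> b. equilibrium_map B f lam $ b v* A)"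
proof -
  have lin: "linear (\<lambda>x::real^3. x v* A)"
    by (simp flip: transpose_matrix_vector)
  have "(\<Sum>j\<in>UNIV. c j *\<^sub>R f j) v* A = (\<Sum>j\<in>UNIV. c j *\<^sub>R (f j v* A))" for c
    by (simp add: linear_sum[OF lin] scaleR_vector_matrix_assoc)
  then show ?thesis
    by (simp add: equilibrium_map_def)
qed

lemma stat_degrees_scaleR_forces:
  fixes psi :: "'m::finite \<Rightarrow> real" and f :: "'m \<Rightarrow> real^3"
  assumes "\<And>j. psi j \<noteq> 0"
  shows "stat_indet B (\<lambda>j. psi j *\<^sub>R f j) = stat_indet B f
    \<and> stat_overdet B (\<lambda>j. psi j *\<^sub>R f j) = stat_overdet B f"
proof (rule stat_degrees_eq_if_equilibrium_map_conj[where T = "\<lambda>y. y"])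
  let ?S = "\<lambda>lam::real^'m. \<chi> j. psi j * lam $ j"
  show "linear ?S"
    by (rule linearI) (simp_all add: vec_eq_iff algebra_simps)
  let ?S' = "\<lambda>mu::real^'m. \<chi> j. mu $ j / psi j"
  have "?S' (?S lam) = lam" "?S (?S' lam) = lam" for lam
    using assms by (simp_all add: vec_eq_iff)
  then show "bij ?S"
    by (intro o_bij[of ?S']) auto
qed (simp_all add: equilibrium_map_scaleR_forces bij_def
    bounded_linear.linear[OF bounded_linear_ident])

lemma stat_degrees_vector_matrix_forces:
  fixes A :: "real^3^3"
  assumes "invertible A"
  shows "stat_indet B (\<lambda>j. f j v* A) = stat_indet B f
    \<and> stat_overdet B (\<lambda>j. f j v* A) = stat_overdet B f"
proof (rule stat_degrees_eq_if_equilibrium_map_conj[where S = "\<lambda>lam. lam"])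
  let ?T = "\<lambda>y::real^3^'b. \<chi> b. y $ b v* A"
  show "linear ?T"
    by (rule linearI)
      (simp_all add: vec_eq_iff vector_matrix_left_distrib scaleR_vector_matrix_assoc)
  obtain A' :: "real^3^3" where A': "A ** A' = mat 1"
    using assms invertible_def by blast
  have "(\<chi> b. ?T y $ b v* A') = y" for y
    by (simp add: vector_matrix_mul_assoc A')
  then show "inj ?T"
    by (rule inj_on_inverseI)
qed (simp_all add: equilibrium_map_vector_matrix_forces bij_def
    bounded_linear.linear[OF bounded_linear_ident])

theorem corollary1:
  fixes B :: "real^'m^'b" and f g :: "'m \<Rightarrow> real^3"
  assumes "proj_transform_statics f g"
  shows "stat_indet B g = stat_indet B f \<and> stat_overdet B g = stat_overdet B f"
proof -
  obtain A :: "real^3^3" and psi where "invertible A" and "\<And>j. psi j \<noteq> 0"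
    and "g = (\<lambda>j. psi j *\<^sub>R (f j v* A))"
    using assms unfolding proj_transform_statics_def by blast
  then show ?thesis
    using stat_degrees_scaleR_forces[of psi B "\<lambda>j. f j v* A"]
      stat_degrees_vector_matrix_forces[of A B f]
    by simp
qed

end
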